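(* Let $G$ be a finite graph and $k\ge 1$ an integer. Then $G$ contains a clique of size $k$ if and only if, in the canonical adjacency matrix $\mathbf{M}$ of $G$, all entries $\mathbf{M}_{ij}$ with $1\le i<j\le k$ equal $1$.
   Context: For an $n\times n$ adjacency matrix $\mathbf{M}$ of a finite simple graph (with respect to some ordering of its vertices), its bit-string is obtained by concatenating the entries strictly above the diagonal column by column, left to right, reading each column from top to bottom. The canonical adjacency matrix of a graph $G$ is the unique adjacency matrix of $G$ (over all orderings of its vertices) whose bit-string is lexicographically greatest. *)

theory Defs
  imports Main
begin

text \<open>A finite simple graph: finite nonempty vertex set V and a symmetric,
irreflexive adjacency relation E (only its restriction to V matters).\<close>
definition simple_graph :: "'a set \<Rightarrow> ('a \<Rightarrow> 'a \<Rightarrow> bool) \<Rightarrow> bool" where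
  "simple_graph V E \<longleftrightarrow> finite V \<and> V \<noteq> {} \<and>
     (\<forall>x\<in>V. \<forall>y\<in>V. E x y \<longrightarrow> E y x) \<and> (\<forall>x\<in>V. \<not> E x x)"

text \<open>Adjacency matrix w.r.t. an ordering sigma of the vertices (sigma a bijection
from {0..<n} onto V, n = card V). Indices are 0-based; entries outside the
n x n range are 0.\<close>
definition adj_matrix_of :: "'a set \<Rightarrow> ('a \<Rightarrow> 'a \<Rightarrow> bool) \<Rightarrow> (nat \<Rightarrow> 'a) \<Rightarrow> (nat \<Rightarrow> nat \<Rightarrow> nat)" where
  "adj_matrix_of V E \<sigma> = (\<lambda>i j. if i < card V \<and> j < card V then of_bool (E (\<sigma> i) (\<sigma> j)) else 0)"

definition is_adj_matrix :: "'a set \<Rightarrow> ('a \<Rightarrow> 'a \<Rightarrow> bool) \<Rightarrow> (nat \<Rightarrow> nat \<Rightarrow> nat) \<Rightarrow> bool" where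
  "is_adj_matrix V E M \<longleftrightarrow> (\<exists>\<sigma>. bij_betw \<sigma> {0..<card V} V \<and> M = adj_matrix_of V E \<sigma>)"

definition bitstring :: "nat \<Rightarrow> (nat \<Rightarrow> nat \<Rightarrow> nat) \<Rightarrow> nat list" where
  "bitstring n M = concat (map (\<lambda>j. map (\<lambda>i. M i j) [0..<j]) [0..<n])"

definition is_canonical_adj_matrix :: "'a set \<Rightarrow> ('a \<Rightarrow> 'a \<Rightarrow> bool) \<Rightarrow> (nat \<Rightarrow> nat \<Rightarrow> nat) \<Rightarrow> bool" where
  "is_canonical_adj_matrix V E M \<longleftrightarrow> is_adj_matrix V E M \<and>
     (\<forall>M'. is_adj_matrix V E M' \<longrightarrow>
        bitstring (card V) M' = bitstring (card V) M \<or>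
        (bitstring (card V) M', bitstring (card V) M) \<in> lexord {(a, b). a < b})"

definition canonical_adj_matrix :: "'a set \<Rightarrow> ('a \<Rightarrow> 'a \<Rightarrow> bool) \<Rightarrow> (nat \<Rightarrow> nat \<Rightarrow> nat)" where
  "canonical_adj_matrix V E = (THE M. is_canonical_adj_matrix V E M)"

definition has_clique :: "'a set \<Rightarrow> ('a \<Rightarrow> 'a \<Rightarrow> bool) \<Rightarrow> nat \<Rightarrow> bool" where
  "has_clique V E k \<longleftrightarrow> (\<exists>S\<subseteq>V. card S = k \<and> (\<forall>x\<in>S. \<forall>y\<in>S. x \<noteq> y \<longrightarrow> E x y))"

end

theory Submission
  imports Defs "HOL-Library.List_Lexorder"
begin

(* Say that a matrix M has an "upper ones block of size k" if M i j = 1 for all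
   i < j < k.  The bit-string of the first k columns is a prefix of the whole bit-string, and
   that prefix lists exactly the entries of this block.  Hence, among 0/1 matrices, a matrix
   whose bit-string is lexicographically at least that of a matrix with an upper ones block of
   size k must itself have such a block.
   - If G has a k-clique S, enumerating S first gives an adjacency matrix with a ones block of
     size k, so the canonical matrix (the lexicographic maximum) has one too.
   - Conversely, a ones block of size k >= 2 in an adjacency matrix forces k <= |V|, and the
     first k vertices of the ordering then form a clique (k = 1 only needs V nonempty). *)

section \<open>Bit-strings\<close>

lemma bitstring_Suc: "bitstring (Suc n) M = bitstring n M @ map (\<lambda>i. M i n) [0..<n]"
  by (simp add: bitstring_def)

lemma length_bitstring: "length (bitstring n M) = (\<Sum>j<n. j)"
  by (induction n) (simp_all add: bitstring_Suc bitstring_def)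

lemma set_bitstring: "set (bitstring n M) = {M i j | i j. i < j \<and> j < n}"
  by (auto simp: bitstring_def) blast

lemma bitstring_eq_iff: "bitstring n M = bitstring n M' \<longleftrightarrow> (\<forall>j<n. \<forall>i<j. M i j = M' i j)"
proof (induction n)
  case 0
  then show ?case by (simp add: bitstring_def)
next
  case (Suc n)
  have "bitstring (Suc n) M = bitstring (Suc n) M' \<longleftrightarrow>
     bitstring n M = bitstring n M' \<and> map (\<lambda>i. M i n) [0..<n] = map (\<lambda>i. M' i n) [0..<n]"
    unfolding bitstring_Suc using length_bitstring[of n M] length_bitstring[of n M'] by simp
  also have "\<dots> \<longleftrightarrow> (\<forall>j<Suc n. \<forall>i<j. M i j = M' i j)"
    using Suc by (auto simp: less_Suc_eq)
  finally show ?case .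
qed

lemma bitstring_prefix: "k \<le> n \<Longrightarrow> \<exists>r. bitstring n M = bitstring k M @ r"
proof (induction n rule: dec_induct)
  case base
  then show ?case by simp
next
  case (step n)
  then show ?case by (auto simp: bitstring_Suc)
qed

lemma finite_bitstrings_01: "finite (bitstring n ` {M. \<forall>i j. M i j \<le> 1})"
proof (rule finite_subset)
  show "bitstring n ` {M. \<forall>i j. M i j \<le> 1} \<subseteq> {xs. set xs \<subseteq> {0, 1} \<and> length xs = (\<Sum>j<n. j)}"
  proof (intro image_subsetI CollectI conjI)
    fix M :: "nat \<Rightarrow> nat \<Rightarrow> nat" assume "M \<in> {M. \<forall>i j. M i j \<le> 1}"
    then show "set (bitstring n M) \<subseteq> {0, 1}" by (force simp: set_bitstring le_Suc_eq)
  qed (rule length_bitstring)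
  show "finite {xs. set xs \<subseteq> {0, 1::nat} \<and> length xs = (\<Sum>j<n. j)}"
    by (rule finite_lists_length_eq) simp
qed

lemma lex_le_prefix_of_maximal:
  fixes xs ys :: "'a::linorder list"
  assumes "length xs = length ys" and "\<forall>x\<in>set xs. x \<le> c" and "\<forall>y\<in>set ys. y = c"
    and "ys @ ys' \<le> xs @ xs'"
  shows "xs = ys"
  using assms
proof (induction xs arbitrary: ys)
  case Nil
  then show ?case by simp
next
  case (Cons a xs)
  then obtain ys0 where ys: "ys = c # ys0" by (cases ys) auto
  have "a \<le> c" using Cons.prems(2) by simp
  moreover have "c # (ys0 @ ys') \<le> a # (xs @ xs')"
    using Cons.prems(4) unfolding ys by simp
  ultimately have "a = c" and le: "ys0 @ ys' \<le> xs @ xs'"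
    unfolding Cons_le_Cons by (simp_all add: not_less[symmetric])
  have "length xs = length ys0" using Cons.prems(1) by (simp add: ys)
  moreover have "\<forall>x\<in>set xs. x \<le> c" using Cons.prems(2) by simp
  moreover have "\<forall>y\<in>set ys0. y = c" using Cons.prems(3) by (simp add: ys)
  ultimately have "xs = ys0" using le by (rule Cons.IH)
  with \<open>a = c\<close> ys show ?case by simp
qed

definition upper_ones :: "nat \<Rightarrow> (nat \<Rightarrow> nat \<Rightarrow> nat) \<Rightarrow> bool" where
  "upper_ones k M \<longleftrightarrow> (\<forall>i j. i < j \<and> j < k \<longrightarrow> M i j = 1)"

lemma upper_ones_of_bitstring_le:
  assumes "k \<le> n" and "\<And>i j. M i j \<le> 1" and "upper_ones k M'"
    and "bitstring n M' \<le> bitstring n M"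
  shows "upper_ones k M"
proof -
  obtain r r' where "bitstring n M = bitstring k M @ r" "bitstring n M' = bitstring k M' @ r'"
    using bitstring_prefix[OF \<open>k \<le> n\<close>] by metis
  with assms(4) have le: "bitstring k M' @ r' \<le> bitstring k M @ r" by simp
  have ones: "\<forall>y\<in>set (bitstring k M'). y = 1"
    using \<open>upper_ones k M'\<close> by (auto simp: set_bitstring upper_ones_def)
  have "bitstring k M = bitstring k M'"
    by (rule lex_le_prefix_of_maximal[OF _ _ ones le])
      (use assms(2) in \<open>auto simp: length_bitstring set_bitstring\<close>)
  with ones have "\<forall>y\<in>set (bitstring k M). y = 1" by simp
  then show ?thesis unfolding upper_ones_def set_bitstring by blast
qed

section \<open>Adjacency matrices\<close>

lemma adj_matrix_of_eq_1:
  "adj_matrix_of V E \<sigma> i j = 1 \<longleftrightarrow> i < card V \<and> j < card V \<and> E (\<sigma> i) (\<sigma> j)"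
  by (auto simp: adj_matrix_of_def)

lemma adj_matrix_le_1: "is_adj_matrix V E M \<Longrightarrow> M i j \<le> 1"
  by (auto simp: is_adj_matrix_def adj_matrix_of_def)

lemma adj_matrix_exists: "finite V \<Longrightarrow> \<exists>M. is_adj_matrix V E M"
  unfolding is_adj_matrix_def using ex_bij_betw_nat_finite by blast

lemma adj_matrix_shape:
  assumes "simple_graph V E" and "is_adj_matrix V E M"
  shows "M i j = M j i" and "M i i = 0" and "\<not> (i < card V \<and> j < card V) \<Longrightarrow> M i j = 0"
proof -
  obtain \<sigma> where \<sigma>: "bij_betw \<sigma> {0..<card V} V" and M: "M = adj_matrix_of V E \<sigma>"
    using assms(2) by (auto simp: is_adj_matrix_def)
  have in_V: "i < card V \<Longrightarrow> \<sigma> i \<in> V" for i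
    using \<sigma> by (auto simp: bij_betw_def)
  have sym: "E x y = E y x" and irrefl: "\<not> E x x" if "x \<in> V" "y \<in> V" for x y
    using assms(1) that unfolding simple_graph_def by blast+
  show "M i j = M j i"
    using sym[OF in_V in_V] by (simp add: M adj_matrix_of_def conj_commute)
  show "M i i = 0"
    using irrefl[OF in_V in_V] by (simp add: M adj_matrix_of_def)
  show "\<not> (i < card V \<and> j < card V) \<Longrightarrow> M i j = 0"
    by (auto simp: M adj_matrix_of_def)
qed

lemma symmetric_eqI:
  fixes M M' :: "nat \<Rightarrow> nat \<Rightarrow> 'a"
  assumes "\<And>i j. M i j = M j i" and "\<And>i j. M' i j = M' j i"
    and "\<And>i j. i \<le> j \<Longrightarrow> M i j = M' i j"
  shows "M = M'"
proof (intro ext)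
  fix i j
  show "M i j = M' i j"
  proof (cases "i \<le> j")
    case False
    then have "M j i = M' j i" by (intro assms(3)) simp
    then show ?thesis using assms(1,2) by metis
  qed (rule assms(3))
qed

lemma adj_matrix_eq_of_bitstring_eq:
  assumes g: "simple_graph V E" and M: "is_adj_matrix V E M" and M': "is_adj_matrix V E M'"
    and eq: "bitstring (card V) M = bitstring (card V) M'"
  shows "M = M'"
proof (rule symmetric_eqI)
  show "M i j = M j i" "M' i j = M' j i" for i j
    using adj_matrix_shape[OF g M] adj_matrix_shape[OF g M'] by simp_all
  fix i j :: nat assume "i \<le> j"
  show "M i j = M' i j"
  proof (cases "i = j \<or> \<not> j < card V")
    case True
    then show ?thesis
      using \<open>i \<le> j\<close> adj_matrix_shape(2,3)[OF g M] adj_matrix_shape(2,3)[OF g M'] by auto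
  next
    case False
    with \<open>i \<le> j\<close> eq show ?thesis by (auto simp: bitstring_eq_iff)
  qed
qed

section \<open>The canonical adjacency matrix\<close>

lemma is_canonical_iff:
  "is_canonical_adj_matrix V E M \<longleftrightarrow> is_adj_matrix V E M \<and>
     (\<forall>M'. is_adj_matrix V E M' \<longrightarrow> bitstring (card V) M' \<le> bitstring (card V) M)"
  by (auto simp: is_canonical_adj_matrix_def list_le_def list_less_def)

text \<open>Existence (the bit-strings form a finite nonempty set, so a maximum exists) and
  uniqueness (an adjacency matrix is determined by its bit-string) of the canonical matrix.\<close>
lemma canonical_adj_matrix_ex1:
  assumes g: "simple_graph V E"
  shows "\<exists>!M. is_canonical_adj_matrix V E M"
proof -
  let ?bs = "bitstring (card V)"
  define B where "B = ?bs ` {M. is_adj_matrix V E M}"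
  have "finite B"
    unfolding B_def
    by (rule finite_subset[OF image_mono finite_bitstrings_01]) (use adj_matrix_le_1 in blast)
  moreover have "B \<noteq> {}"
    using adj_matrix_exists g by (auto simp: B_def simple_graph_def)
  ultimately obtain M0 where M0: "is_adj_matrix V E M0" "?bs M0 = Max B"
    using Max_in unfolding B_def by (metis (no_types, lifting) imageE mem_Collect_eq)
  have "is_canonical_adj_matrix V E M0"
    unfolding is_canonical_iff using M0 \<open>finite B\<close> by (auto simp: B_def)
  moreover have "M = M0" if "is_canonical_adj_matrix V E M" for M
  proof -
    from that have M: "is_adj_matrix V E M" and "?bs M0 \<le> ?bs M"
      using M0(1) by (auto simp: is_canonical_iff)
    moreover have "?bs M \<le> ?bs M0"
      using M \<open>finite B\<close> by (auto simp: M0(2) B_def)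
    ultimately show ?thesis
      using adj_matrix_eq_of_bitstring_eq[OF g M M0(1)] by simp
  qed
  ultimately show ?thesis by blast
qed

lemma canonical_adj_matrix_is_canonical:
  "simple_graph V E \<Longrightarrow> is_canonical_adj_matrix V E (canonical_adj_matrix V E)"
  unfolding canonical_adj_matrix_def by (rule theI'[OF canonical_adj_matrix_ex1])

section \<open>Cliques and upper ones blocks\<close>

lemma ex_enumeration_subset_first:
  assumes "finite V" and "S \<subseteq> V"
  shows "\<exists>\<sigma>. bij_betw \<sigma> {0..<card V} V \<and> bij_betw \<sigma> {0..<card S} S"
proof -
  let ?k = "card S" and ?n = "card V"
  have "finite S" using assms finite_subset by blast
  then obtain \<alpha> where \<alpha>: "bij_betw \<alpha> {0..<?k} S"
    using ex_bij_betw_nat_finite by blast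
  obtain \<beta> where \<beta>: "bij_betw \<beta> {0..<?n - ?k} (V - S)"
    using ex_bij_betw_nat_finite[of "V - S"] assms \<open>finite S\<close> by (auto simp: card_Diff_subset)
  have shift: "bij_betw (\<lambda>i. i - ?k) {?k..<?n} {0..<?n - ?k}"
    by (rule bij_betw_byWitness[where f'="\<lambda>i. i + ?k"]) auto
  define \<sigma> where "\<sigma> i = (if i \<in> {0..<?k} then \<alpha> i else \<beta> (i - ?k))" for i
  have "bij_betw \<sigma> ({0..<?k} \<union> {?k..<?n}) (S \<union> (V - S))"
    unfolding \<sigma>_def
    by (rule bij_betw_disjoint_Un[OF \<alpha> bij_betw_trans[OF shift \<beta>, unfolded comp_def]]) auto
  moreover have "{0..<?k} \<union> {?k..<?n} = {0..<?n}"
    using card_mono[OF assms] by auto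
  moreover have "S \<union> (V - S) = V"
    using \<open>S \<subseteq> V\<close> by blast
  ultimately have "bij_betw \<sigma> {0..<?n} V" by simp
  moreover have "bij_betw \<sigma> {0..<?k} S"
    using \<alpha> by (rule bij_betw_cong[THEN iffD1, rotated]) (simp add: \<sigma>_def)
  ultimately show ?thesis by blast
qed

text \<open>Listing the vertices of a k-clique first yields an adjacency matrix with an upper ones
  block of size k.\<close>
lemma clique_gives_upper_ones:
  assumes "finite V" and "has_clique V E k"
  shows "\<exists>M. is_adj_matrix V E M \<and> upper_ones k M \<and> k \<le> card V"
proof -
  obtain S where S: "S \<subseteq> V" "card S = k" "\<forall>x\<in>S. \<forall>y\<in>S. x \<noteq> y \<longrightarrow> E x y"
    using assms(2) by (auto simp: has_clique_def)
  obtain \<sigma> where \<sigma>V: "bij_betw \<sigma> {0..<card V} V" and \<sigma>S: "bij_betw \<sigma> {0..<k} S"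
    using ex_enumeration_subset_first[OF assms(1) S(1)] S(2) by blast
  have "k \<le> card V" using S card_mono[OF assms(1)] by blast
  have "upper_ones k (adj_matrix_of V E \<sigma>)"
    unfolding upper_ones_def adj_matrix_of_eq_1
  proof (intro allI impI conjI)
    fix i j assume ij: "i < j \<and> j < k"
    then show "i < card V" "j < card V" using \<open>k \<le> card V\<close> by auto
    have "\<sigma> i \<noteq> \<sigma> j"
      using ij inj_on_eq_iff[OF bij_betw_imp_inj_on[OF \<sigma>S], of i j] by simp
    moreover have "\<sigma> i \<in> S" "\<sigma> j \<in> S"
      using ij \<sigma>S by (auto simp: bij_betw_def)
    ultimately show "E (\<sigma> i) (\<sigma> j)" using S(3) by blast
  qed
  with \<sigma>V \<open>k \<le> card V\<close> show ?thesis by (auto simp: is_adj_matrix_def)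
qed

text \<open>Conversely, the first k vertices of an ordering whose adjacency matrix has an upper ones
  block of size k form a clique.\<close>
lemma upper_ones_gives_clique:
  assumes g: "simple_graph V E" and M: "is_adj_matrix V E M"
    and ones: "upper_ones k M" and "k \<ge> 1"
  shows "has_clique V E k"
proof (cases "k = 1")
  case True
  obtain x where "x \<in> V" using g by (auto simp: simple_graph_def)
  then show ?thesis unfolding has_clique_def True by (intro exI[of _ "{x}"]) auto
next
  case False
  obtain \<sigma> where \<sigma>: "bij_betw \<sigma> {0..<card V} V" and M_def: "M = adj_matrix_of V E \<sigma>"
    using M by (auto simp: is_adj_matrix_def)
  have edge: "i < card V \<and> j < card V \<and> E (\<sigma> i) (\<sigma> j)" if "i < j" "j < k" for i j
  proof -
    have "M i j = 1" using ones that unfolding upper_ones_def by blast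
    then show ?thesis unfolding M_def adj_matrix_of_eq_1 .
  qed
  have "k \<le> card V"
    using edge[of 0 "k - 1"] False \<open>k \<ge> 1\<close> by auto
  then have sub: "{0..<k} \<subseteq> {0..<card V}" by auto
  have "E x y" if xy: "x \<in> \<sigma> ` {0..<k}" "y \<in> \<sigma> ` {0..<k}" "x \<noteq> y" for x y
  proof -
    obtain i j where ij: "i < k" "j < k" "x = \<sigma> i" "y = \<sigma> j"
      using xy(1,2) by auto
    with xy(3) have "i \<noteq> j" by blast
    show ?thesis
    proof (cases "i < j")
      case True
      with edge ij show ?thesis by simp
    next
      case False
      with ij \<open>i \<noteq> j\<close> edge[of j i] have "E y x" "x \<in> V" "y \<in> V"
        using \<sigma> \<open>k \<le> card V\<close> by (auto simp: bij_betw_def)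
      with g show ?thesis by (auto simp: simple_graph_def)
    qed
  qed
  moreover have "\<sigma> ` {0..<k} \<subseteq> V" "card (\<sigma> ` {0..<k}) = k"
    using \<sigma> sub by (auto simp: bij_betw_def card_image inj_on_subset)
  ultimately show ?thesis unfolding has_clique_def by blast
qed

theorem mainTheorem9:
  fixes V :: "'a set" and E :: "'a \<Rightarrow> 'a \<Rightarrow> bool" and k :: nat
  assumes "simple_graph V E" and "k \<ge> 1"
  shows "has_clique V E k \<longleftrightarrow>
         (\<forall>i j. i < j \<and> j < k \<longrightarrow> canonical_adj_matrix V E i j = 1)"
proof -
  define M where "M = canonical_adj_matrix V E"
  have canon: "is_adj_matrix V E M"
    "\<And>M'. is_adj_matrix V E M' \<Longrightarrow> bitstring (card V) M' \<le> bitstring (card V) M"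
    using canonical_adj_matrix_is_canonical[OF assms(1)] by (simp_all add: M_def is_canonical_iff)
  have "has_clique V E k \<longleftrightarrow> upper_ones k M"
  proof
    assume "has_clique V E k"
    moreover have "finite V" using assms(1) by (simp add: simple_graph_def)
    ultimately obtain M' where M': "is_adj_matrix V E M'" "upper_ones k M'" "k \<le> card V"
      using clique_gives_upper_ones by blast
    show "upper_ones k M"
      by (rule upper_ones_of_bitstring_le[OF M'(3) adj_matrix_le_1[OF canon(1)] M'(2) canon(2)[OF M'(1)]])
  next
    assume "upper_ones k M"
    then show "has_clique V E k" by (rule upper_ones_gives_clique[OF assms(1) canon(1) _ assms(2)])
  qed
  then show ?thesis by (simp add: M_def upper_ones_def)
qed

end
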